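(* Let $\epsilon_\tau,\omega_1,\omega_2\in(0,1)$, $\tau_{\mathrm{prev}}>0$, $c\in\mathbb{R}^m$, and set $a:=(1-\epsilon_\tau)(1-\omega_1)(1-\omega_2)\|c\|_1$. For a real number $h$ define the update $T(h):=\tau_{\mathrm{prev}}$ if $\|c\|_1=0$ or $h\le a/\tau_{\mathrm{prev}}$, and $T(h):=a/h$ otherwise. Let $\theta_3>0$, $\beta\in(0,1)$, $\sigma\in[2,4]$ with $\theta_3\beta^{\sigma/2}\le\tfrac12$, and let $h,\bar h\in\mathbb{R}$ satisfy $|\bar h-h|\le\theta_3\beta^{\sigma/2}|h|$. Then $|T(\bar h)-T(h)|\le2\theta_3\beta^{\sigma/2}\tau_{\mathrm{prev}}$. Consequently, if $\tau_{\mathrm{prev}}\le\tau_{\max}$, $g,d\in\mathbb{R}^n$ and $D\ge0$ satisfy $|g^Td|\le\kappa_{gd,\Delta l}D$, then $$|(T(\bar h)-T(h))\,g^Td|\le 2\theta_3\tau_{\max}\kappa_{gd,\Delta l}\,\beta^{\sigma/2}D.$$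
   Context: In the paper, $h=g^Td+\max\{d^THd,\epsilon_d\|d\|_2^2\}$ (deterministic quantities), $\bar h=\bar g^T\bar d+\max\{\bar d^TH\bar d,\epsilon_d\|\bar d\|_2^2\}$ (stochastic quantities), $T(\bar h)$ and $T(h)$ are the stochastic and deterministic merit parameters obtained from the previous value $\tau_{\mathrm{prev}}$, and $D=\Delta l(\tau,g,d)$. *)

theory Defs
  imports "HOL-Analysis.Analysis"
begin

definition norm1 :: "real ^ 'm \<Rightarrow> real" where
  "norm1 c = (\<Sum>i\<in>UNIV. \<bar>c $ i\<bar>)"

definition merit_update ::
  "real \<Rightarrow> real \<Rightarrow> real \<Rightarrow> real \<Rightarrow> real ^ 'm \<Rightarrow> real \<Rightarrow> real" where
  "merit_update eps_tau om1 om2 tau_prev c h =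
     (let a = (1 - eps_tau) * (1 - om1) * (1 - om2) * norm1 c in
      if norm1 c = 0 \<or> h \<le> a / tau_prev then tau_prev else a / h)"

end

theory Submission
  imports Defs
begin

text \<open>For positive \<open>a\<close> the update is \<open>a / max h (a/\<tau>\<^sub>p\<^sub>r\<^sub>e\<^sub>v)\<close>, and \<open>h \<mapsto> max h s\<close> changes by
  at most \<open>e * max h s\<close> under a relative perturbation of size \<open>e \<le> 1\<close> (a nonpositive \<open>h\<close>
  stays nonpositive, so both maxima equal \<open>s\<close>). Dividing \<open>a\<close> by the two maxima then changes
  the result by at most \<open>e * a/s = e \<tau>\<^sub>p\<^sub>r\<^sub>e\<^sub>v\<close>, which is even half the claimed bound.\<close>

lemma norm1_nonneg: "0 \<le> norm1 c"
  unfolding norm1_def by (simp add: sum_nonneg)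

lemma threshold_eq_divide_max:
  fixes a t h :: real
  assumes "0 < a" "0 < t"
  shows "(if h \<le> a / t then t else a / h) = a / max h (a / t)"
  using assms by (auto simp: max_def)

lemma merit_update_eq_divide_max:
  assumes "eps_tau < 1" "om1 < 1" "om2 < 1" "0 < tau_prev" "norm1 c \<noteq> 0"
  defines "a \<equiv> (1 - eps_tau) * (1 - om1) * (1 - om2) * norm1 c"
  shows "0 < a" and "merit_update eps_tau om1 om2 tau_prev c h = a / max h (a / tau_prev)"
proof -
  show a_pos: "0 < a"
    using assms norm1_nonneg[of c] unfolding a_def by (simp add: less_le)
  show "merit_update eps_tau om1 om2 tau_prev c h = a / max h (a / tau_prev)"
    unfolding merit_update_def Let_def a_def[symmetric]
    using threshold_eq_divide_max[OF a_pos \<open>0 < tau_prev\<close>] \<open>norm1 c \<noteq> 0\<close> by simp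
qed

lemma abs_max_diff_le_relative:
  fixes e s h hb :: real
  assumes "0 \<le> e" "e \<le> 1" "0 < s" and pert: "\<bar>hb - h\<bar> \<le> e * \<bar>h\<bar>"
  shows "\<bar>max hb s - max h s\<bar> \<le> e * max h s"
proof (cases "0 < h")
  case True
  have "\<bar>max hb s - max h s\<bar> \<le> \<bar>hb - h\<bar>" by linarith
  also have "\<dots> \<le> e * h" using pert True by simp
  also have "\<dots> \<le> e * max h s" using \<open>0 \<le> e\<close> by (simp add: mult_left_mono)
  finally show ?thesis .
next
  case False
  have "hb \<le> (1 - e) * h" using pert False by (simp add: algebra_simps)
  also have "\<dots> \<le> 0" using False \<open>e \<le> 1\<close> by (simp add: mult_nonneg_nonpos)
  finally show ?thesis using False \<open>0 < s\<close> \<open>0 \<le> e\<close> by simp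
qed

lemma abs_divide_max_diff_le_relative:
  fixes a e s h hb :: real
  assumes "0 < a" "0 \<le> e" "e \<le> 1" "0 < s" and pert: "\<bar>hb - h\<bar> \<le> e * \<bar>h\<bar>"
  shows "\<bar>a / max hb s - a / max h s\<bar> \<le> e * (a / s)"
proof -
  define X Y where "X = max hb s" and "Y = max h s"
  have "0 < X" "0 < Y" "s \<le> X" using \<open>0 < s\<close> by (auto simp: X_def Y_def)
  have "a / X - a / Y = a * (Y - X) / (X * Y)"
    using \<open>0 < X\<close> \<open>0 < Y\<close> by (simp add: field_simps)
  then have "\<bar>a / X - a / Y\<bar> = a * \<bar>X - Y\<bar> / (X * Y)"
    using \<open>0 < X\<close> \<open>0 < Y\<close> \<open>0 < a\<close> by (simp add: abs_mult abs_minus_commute)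
  also have "\<dots> \<le> a * (e * Y) / (X * Y)"
    using abs_max_diff_le_relative[OF assms(2-5)] \<open>0 < a\<close> \<open>0 < X\<close> \<open>0 < Y\<close>
    by (intro divide_right_mono mult_left_mono) (auto simp: X_def Y_def)
  also have "\<dots> = e * (a / X)" using \<open>0 < Y\<close> by simp
  also have "\<dots> \<le> e * (a / s)"
    using \<open>0 < a\<close> \<open>0 \<le> e\<close> \<open>0 < s\<close> \<open>s \<le> X\<close> by (intro mult_left_mono divide_left_mono) auto
  finally show ?thesis by (simp add: X_def Y_def)
qed

lemma abs_merit_update_diff_le:
  assumes "eps_tau < 1" "om1 < 1" "om2 < 1" "0 < tau_prev" "0 \<le> e" "e \<le> 1"
    and pert: "\<bar>hbar - h\<bar> \<le> e * \<bar>h\<bar>"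
  shows "\<bar>merit_update eps_tau om1 om2 tau_prev c hbar - merit_update eps_tau om1 om2 tau_prev c h\<bar>
           \<le> e * tau_prev"
proof (cases "norm1 c = 0")
  case True
  then show ?thesis using assms by (simp add: merit_update_def)
next
  case False
  note update = merit_update_eq_divide_max[OF assms(1-4) False]
  define a where "a = (1 - eps_tau) * (1 - om1) * (1 - om2) * norm1 c"
  have "0 < a" using update(1) by (simp add: a_def)
  then have "\<bar>a / max hbar (a / tau_prev) - a / max h (a / tau_prev)\<bar> \<le> e * (a / (a / tau_prev))"
    using \<open>0 < tau_prev\<close>
    by (intro abs_divide_max_diff_le_relative[OF _ \<open>0 \<le> e\<close> \<open>e \<le> 1\<close> _ pert]) simp_all
  then show ?thesis using \<open>0 < a\<close> by (simp add: update(2) a_def[symmetric])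
qed

theorem lemma4p13:
  fixes eps_tau om1 om2 tau_prev theta3 beta sigma h hbar :: real
    and c :: "real ^ 'm"
    and tau_max kappa D :: real
    and g d :: "real ^ 'n"
  assumes "0 < eps_tau" "eps_tau < 1" "0 < om1" "om1 < 1" "0 < om2" "om2 < 1"
    and "0 < tau_prev"
    and "0 < theta3" "0 < beta" "beta < 1" "2 \<le> sigma" "sigma \<le> 4"
    and "theta3 * beta powr (sigma / 2) \<le> 1 / 2"
    and "\<bar>hbar - h\<bar> \<le> theta3 * beta powr (sigma / 2) * \<bar>h\<bar>"
  shows "\<bar>merit_update eps_tau om1 om2 tau_prev c hbar - merit_update eps_tau om1 om2 tau_prev c h\<bar>
           \<le> 2 * theta3 * beta powr (sigma / 2) * tau_prev
         \<and> ((tau_prev \<le> tau_max \<and> 0 \<le> D \<and> \<bar>g \<bullet> d\<bar> \<le> kappa * D) \<longrightarrow>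
            \<bar>(merit_update eps_tau om1 om2 tau_prev c hbar - merit_update eps_tau om1 om2 tau_prev c h) * (g \<bullet> d)\<bar>
              \<le> 2 * theta3 * tau_max * kappa * beta powr (sigma / 2) * D)"
proof -
  define e where "e = theta3 * beta powr (sigma / 2)"
  define \<Delta> where "\<Delta> = merit_update eps_tau om1 om2 tau_prev c hbar - merit_update eps_tau om1 om2 tau_prev c h"
  have "0 \<le> e" using assms by (simp add: e_def)
  have "\<bar>\<Delta>\<bar> \<le> e * tau_prev"
    unfolding \<Delta>_def by (rule abs_merit_update_diff_le) (use assms in \<open>auto simp: e_def\<close>)
  moreover have "e * tau_prev \<le> 2 * e * tau_prev"
    using \<open>0 \<le> e\<close> \<open>0 < tau_prev\<close> by simp
  ultimately have bound: "\<bar>\<Delta>\<bar> \<le> 2 * e * tau_prev" by linarith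
  have "\<bar>\<Delta> * (g \<bullet> d)\<bar> \<le> (2 * e * tau_max) * (kappa * D)"
    if "tau_prev \<le> tau_max" "0 \<le> D" "\<bar>g \<bullet> d\<bar> \<le> kappa * D"
  proof -
    have "\<bar>\<Delta>\<bar> \<le> 2 * e * tau_max"
      using bound that(1) \<open>0 \<le> e\<close> by (smt (verit) mult_left_mono)
    then show ?thesis using that by (simp add: abs_mult mult_mono)
  qed
  then show ?thesis using bound by (simp add: \<Delta>_def e_def ac_simps)
qed

end
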